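(* Let $\mathbf A=(\mathbf a_1,\ldots,\mathbf a_m)^\top\in\mathbb R^{m\times d}$ and $\mathbf b\in\mathbb R^m$. If $m\le 2d-1$, then $(\mathbf A,\mathbf b)$ is not affine phase retrievable for $\mathbb R^d$.
   Context: $(\mathbf A,\mathbf b)$ is called affine phase retrievable for $\mathbb R^d$ if the map $\mathbf x\mapsto(|\langle\mathbf a_1,\mathbf x\rangle+b_1|,\ldots,|\langle\mathbf a_m,\mathbf x\rangle+b_m|)$ is injective on $\mathbb R^d$, where $\mathbf b=(b_1,\ldots,b_m)^\top$. *)

theory Defs
  imports "HOL-Analysis.Analysis"
begin

definition affine_phase_retrievable :: "real^'d^'m \<Rightarrow> real^'m \<Rightarrow> bool" where
  "affine_phase_retrievable A b \<longleftrightarrow>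
     inj (\<lambda>x::real^'d. \<chi> i. \<bar>(A $ i) \<bullet> x + b $ i\<bar>)"

end

theory Submission
  imports Defs
begin

text \<open>Choose indices T whose rows a_i form a basis of the row space, and let S be the remaining
  indices. Then dim span {a_i | i \<in> S} is at most |S| and at most |T|, hence at most m/2 < d, so
  some u \<noteq> 0 is orthogonal to every a_i with i \<in> S; and since the a_i with i \<in> T are
  independent, some v solves a_i \<bullet> v + b_i = 0 for all i \<in> T. The measurements of v + u
  and v - u then coincide: on T both are |\<plusminus>a_i \<bullet> u|, on S both are |a_i \<bullet> v + b_i|.\<close>

lemma independent_imp_inner_interpolation:
  fixes B :: "'a::euclidean_space set" and c :: "'a \<Rightarrow> real"
  assumes "independent B"
  obtains v where "\<And>w. w \<in> B \<Longrightarrow> w \<bullet> v = c w"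
proof -
  obtain g :: "'a \<Rightarrow> real" where "linear g" and g: "\<forall>w\<in>B. g w = c w"
    using linear_independent_extend[OF assms] by blast
  have "w \<bullet> adjoint g 1 = g w" for w
    using adjoint_works[OF \<open>linear g\<close>] by simp
  with g show thesis
    by (intro that[of "adjoint g 1"]) simp
qed

lemma obtain_independent_split:
  fixes a :: "'i::finite \<Rightarrow> 'a::euclidean_space"
  obtains T where "inj_on a T" "independent (a ` T)" "2 * dim (a ` (- T)) \<le> CARD('i)"
proof -
  obtain B where B: "B \<subseteq> range a" "independent B" "range a \<subseteq> span B" "card B = dim (range a)"
    by (rule basis_exists)
  then obtain T where T: "inj_on a T" "B = a ` T"
    by (meson subset_image_inj)
  have "dim (a ` (- T)) \<le> card (a ` (- T))"
    by (simp add: dim_le_card')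
  also have "\<dots> \<le> card (- T)"
    by (rule card_image_le) simp
  finally have "dim (a ` (- T)) \<le> card (- T)" .
  moreover have "dim (a ` (- T)) \<le> card T"
    using dim_subset[of "a ` (- T)" "range a"] B(4) T card_image by fastforce
  moreover have "card T + card (- T) = CARD('i)"
    by (simp add: Compl_eq_Diff_UNIV card_Diff_subset card_mono)
  ultimately show thesis
    using T B(2) by (intro that[of T]) auto
qed

lemma not_affine_phase_retrievableI:
  fixes A :: "real^'d^'m" and b :: "real^'m"
  assumes "u \<noteq> 0"
    and "\<And>i. i \<in> T \<Longrightarrow> A $ i \<bullet> v + b $ i = 0"
    and "\<And>i. i \<notin> T \<Longrightarrow> A $ i \<bullet> u = 0"
  shows "\<not> affine_phase_retrievable A b"
proof
  assume "affine_phase_retrievable A b"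
  then have inj: "inj (\<lambda>x::real^'d. \<chi> i. \<bar>(A $ i) \<bullet> x + b $ i\<bar>)"
    by (simp add: affine_phase_retrievable_def)
  have "\<bar>A $ i \<bullet> (v + u) + b $ i\<bar> = \<bar>A $ i \<bullet> (v - u) + b $ i\<bar>" for i
    using assms(2,3)[of i] by (cases "i \<in> T") (simp_all add: inner_add_right inner_diff_right)
  then have "(\<chi> i. \<bar>A $ i \<bullet> (v + u) + b $ i\<bar>) = (\<chi> i. \<bar>A $ i \<bullet> (v - u) + b $ i\<bar>)"
    by (simp add: vec_eq_iff)
  then have eq: "v + u = v - u"
    by (rule injD[OF inj])
  have "2 *\<^sub>R u = (v + u) - (v - u)"
    by (simp add: scaleR_2)
  also have "\<dots> = 0"
    unfolding eq by (rule diff_self)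
  finally show False
    using \<open>u \<noteq> 0\<close> by simp
qed

theorem theorem2p2:
  fixes A :: "real^'d^'m" and b :: "real^'m"
  assumes "CARD('m) \<le> 2 * CARD('d) - 1"
  shows "\<not> affine_phase_retrievable A b"
proof -
  let ?a = "\<lambda>i. A $ i"
  obtain T where T: "inj_on ?a T" "independent (?a ` T)" "2 * dim (?a ` (- T)) \<le> CARD('m)"
    by (rule obtain_independent_split)
  have "0 < CARD('d)"
    by simp
  with assms T(3) have "dim (?a ` (- T)) < CARD('d)"
    by linarith
  then have "dim (?a ` (- T)) < DIM(real^'d)"
    by simp
  then obtain u where "u \<noteq> 0" and u: "\<And>y. y \<in> span (?a ` (- T)) \<Longrightarrow> orthogonal u y"
    by (rule orthogonal_to_subspace_exists) blast
  have uS: "A $ i \<bullet> u = 0" if "i \<notin> T" for i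
  proof -
    have "orthogonal u (A $ i)"
      using that by (intro u span_base) simp
    then show ?thesis
      by (simp add: orthogonal_def inner_commute)
  qed
  obtain v where v: "\<And>w. w \<in> ?a ` T \<Longrightarrow> w \<bullet> v = - b $ inv_into T ?a w"
    by (rule independent_imp_inner_interpolation[OF T(2), where c = "\<lambda>w. - b $ inv_into T ?a w"]) blast
  have vT: "A $ i \<bullet> v + b $ i = 0" if "i \<in> T" for i
    using v[of "A $ i"] that by (simp add: inv_into_f_f[OF T(1)])
  show ?thesis
    by (rule not_affine_phase_retrievableI[OF \<open>u \<noteq> 0\<close> vT uS])
qed

end
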